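(* Let $A:\mathbb{R}^N\to\mathbb{R}^{N\times N}$ be such that $A(y)$ is symmetric positive semidefinite for all $y$ and $\|A(u)-A(v)\|\le L\|u-v\|$ for all $u,v$, with $L>0$. Let $t_n\in\mathbb{R}$, $\Delta t>0$, $y^n,g^{n+1}\in\mathbb{R}^N$, and let $\tilde y:[t_n,t_n+\Delta t]\to\mathbb{R}^N$ solve $$\tilde y'(t)=-A(\tilde y(t))\tilde y(t)+g^{n+1},\qquad \tilde y(t_n)=y^n.$$ Define $\tilde y^{(0)}(t)\equiv y^n$ and, for $m\ge0$, $\tilde y^{(m+1)}$ as the solution on $[t_n,t_n+\Delta t]$ of $(\tilde y^{(m+1)})'(t)=-A(\tilde y^{(m)}(t))\tilde y^{(m+1)}(t)+g^{n+1}$, $\tilde y^{(m+1)}(t_n)=y^n$. Let $\omega\ge 0$ be such that $(A(\tilde y^{(m)}(t))x,x)\ge\omega(x,x)$ for all $x\in\mathbb{R}^N$, all $t\in[t_n,t_n+\Delta t]$ and all $m\ge0$. If $$\Delta t\,\varphi(-\Delta t\,\omega)\,L\max_{s\in[t_n,t_n+\Delta t]}\|\tilde y(s)\|<1,$$ then $$\max_{s\in[t_n,t_n+\Delta t]}\|\tilde y(s)-\tilde y^{(m+1)}(s)\|\le \Delta t\,\varphi(-\Delta t\omega)\,L\max_{s}\|\tilde y(s)\|\;\max_{s\in[t_n,t_n+\Delta t]}\|\tilde y(s)-\tilde y^{(m)}(s)\|$$ for all $m\ge0$, and consequently $\max_{s\in[t_n,t_n+\Delta t]}\|\tilde y(s)-\tilde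 y^{(m)}(s)\|\to0$ as $m\to\infty$.
   Context: $(x,y)=y^Tx$ is the standard inner product; $\|\cdot\|$ is the Euclidean vector norm and induced matrix norm. $\varphi(z)=(e^z-1)/z$ with $\varphi(0)=1$; for $t\ge0$, $t\varphi(-t\omega)=t$ if $\omega=0$ and $=(1-e^{-t\omega})/\omega$ if $\omega>0$. *)

theory Defs
  imports "HOL-Analysis.Analysis"
begin

definition phi :: "real \<Rightarrow> real" where
  "phi z = (if z = 0 then 1 else (exp z - 1) / z)"

definition mat_norm :: "real^'n^'n \<Rightarrow> real" where
  "mat_norm M = onorm (\<lambda>x. M *v x)"

end

theory Submission
  imports Defs
begin

(*
  The error e = ytil - Y (m+1) vanishes at t_n and satisfies
  e' = - A(Y m) e - (A(ytil) - A(Y m)) ytil.  Coercivity of A(Y m) and the Lipschitz bound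
  give (e, e') <= - omega |e|^2 + c |e| with c = L max|ytil| max|ytil - Y m|, that is
  |e|' <= - omega |e| + c wherever e <> 0.  Integrating this with the factor exp(omega t)
  from the last zero of e yields |e(t)| <= c dt phi(- dt omega), the contraction estimate;
  iterating it gives geometric convergence.
*)

lemma phi_pos: "z \<le> 0 \<Longrightarrow> phi z > 0"
proof (cases "z = 0")
  case False
  assume "z \<le> 0"
  then have "z < 0" using False by simp
  then have "exp z < 1" by simp
  then show ?thesis using \<open>z < 0\<close> by (simp add: phi_def divide_neg_neg)
qed (simp add: phi_def)

lemma norm_matrix_vector_mult_le: "norm (M *v x) \<le> mat_norm M * norm x"
  unfolding mat_norm_def by (rule onorm[OF matrix_vector_mul_bounded_linear])

lemma norm_le_SUP_Icc:
  fixes f :: "real \<Rightarrow> 'a::real_normed_vector"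
  assumes "continuous_on {a..b} f" and "s \<in> {a..b}"
  shows "norm (f s) \<le> (SUP s\<in>{a..b}. norm (f s))"
proof (rule cSUP_upper[OF assms(2)])
  have "compact ((\<lambda>s. norm (f s)) ` {a..b})"
    by (intro compact_continuous_image continuous_intros assms(1) compact_Icc)
  then show "bdd_above ((\<lambda>s. norm (f s)) ` {a..b})"
    by (intro bounded_imp_bdd_above compact_imp_bounded)
qed

lemma continuous_on_of_has_vector_derivative:
  assumes "\<And>t. t \<in> S \<Longrightarrow> (f has_vector_derivative f' t) (at t within S)"
  shows "continuous_on S f"
  using assms continuous_on_eq_continuous_within has_vector_derivative_continuous by blast

lemma has_real_derivative_norm:
  fixes e :: "real \<Rightarrow> 'a::real_inner"
  assumes der: "(e has_vector_derivative e') (at s)" and nz: "e s \<noteq> 0"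
  shows "((\<lambda>s. norm (e s)) has_real_derivative (e' \<bullet> e s) / norm (e s)) (at s)"
proof -
  have "(e has_derivative (\<lambda>h. h *\<^sub>R e')) (at s)"
    using der by (simp add: has_vector_derivative_def)
  from has_derivative_compose[OF this has_derivative_norm[OF nz]]
  have "((\<lambda>s. norm (e s)) has_derivative (\<lambda>h. (h *\<^sub>R e') \<bullet> sgn (e s))) (at s)"
    by (simp add: o_def)
  then show ?thesis
    by (rule has_derivative_imp_has_field_derivative)
      (simp add: sgn_div_norm inner_commute field_simps)
qed

lemma obtain_last_zero:
  fixes e :: "real \<Rightarrow> 'a::real_normed_vector"
  assumes cont: "continuous_on {a..t} e" and "a \<le> t" "e a = 0" "e t \<noteq> 0"
  obtains t0 where "a \<le> t0" "t0 < t" "e t0 = 0" "\<And>s. t0 < s \<Longrightarrow> s \<le> t \<Longrightarrow> e s \<noteq> 0"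
proof -
  define Z where "Z = {s \<in> {a..t}. e s = 0}"
  have "Z \<noteq> {}" using assms by (auto simp: Z_def)
  moreover have "bdd_above Z" by (auto simp: Z_def bdd_above_def)
  moreover have "closed Z" unfolding Z_def
    by (rule continuous_closed_preimage_constant[OF cont closed_atLeastAtMost])
  ultimately have t0: "Sup Z \<in> Z" by (rule closed_contains_Sup)
  have upper: "s \<le> Sup Z" if "s \<in> Z" for s using that \<open>bdd_above Z\<close> by (rule cSup_upper)
  show thesis
  proof (rule that)
    show "a \<le> Sup Z" "e (Sup Z) = 0" using t0 by (auto simp: Z_def)
    show "Sup Z < t" using t0 assms(4) by (auto simp: Z_def less_le)
    show "e s \<noteq> 0" if "Sup Z < s" "s \<le> t" for s
      using upper[of s] that t0 by (auto simp: Z_def)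
  qed
qed

lemma has_real_derivative_exp_weighted_norm:
  fixes e :: "real \<Rightarrow> 'a::real_inner"
  assumes "(e has_vector_derivative e') (at s)" and "e s \<noteq> 0"
  shows "((\<lambda>s. exp (\<omega> * (s - a)) * norm (e s)) has_real_derivative
    exp (\<omega> * (s - a)) * (\<omega> * norm (e s) + (e' \<bullet> e s) / norm (e s))) (at s)"
proof -
  have "((\<lambda>s. exp (\<omega> * (s - a))) has_real_derivative exp (\<omega> * (s - a)) * \<omega>) (at s)"
    by (auto intro!: derivative_eq_intros)
  from DERIV_mult[OF this has_real_derivative_norm[OF assms]]
  show ?thesis by (simp add: algebra_simps)
qed

text \<open>
  The function \<open>F\<close> below is nonincreasing wherever \<open>e \<noteq> 0\<close>
  and nonpositive at every zero of \<open>e\<close>, so it cannot become positive.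
\<close>
lemma exp_weighted_norm_le:
  fixes e e' :: "real \<Rightarrow> 'a::real_inner" and \<Phi> :: "real \<Rightarrow> real"
  assumes e0: "e a = 0" and cont: "continuous_on {a..b} e"
    and der: "\<And>t. a < t \<Longrightarrow> t < b \<Longrightarrow> (e has_vector_derivative e' t) (at t)"
    and energy: "\<And>t. a < t \<Longrightarrow> t < b \<Longrightarrow> e t \<bullet> e' t \<le> - \<omega> * (norm (e t))\<^sup>2 + c * norm (e t)"
    and c: "c \<ge> 0"
    and \<Phi>: "\<And>t. (\<Phi> has_real_derivative exp (\<omega> * (t - a))) (at t)"
    and \<Phi>_nonneg: "\<And>t. a \<le> t \<Longrightarrow> 0 \<le> \<Phi> t"
    and t: "t \<in> {a..b}"
  shows "exp (\<omega> * (t - a)) * norm (e t) \<le> c * \<Phi> t"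
proof (rule ccontr)
  define F where "F s = exp (\<omega> * (s - a)) * norm (e s) - c * \<Phi> s" for s
  assume "\<not> ?thesis"
  then have Ft: "F t > 0" by (simp add: F_def)
  have F_zero: "F s \<le> 0" if "a \<le> s" "e s = 0" for s
    using that c \<Phi>_nonneg[of s] by (simp add: F_def)
  have cont_t: "continuous_on {a..t} e" using cont t by (auto intro: continuous_on_subset)
  have "e t \<noteq> 0"
  proof
    assume "e t = 0"
    then show False using Ft F_zero[of t] t by simp
  qed
  then obtain t0 where t0: "a \<le> t0" "t0 < t" "e t0 = 0"
    and nz: "\<And>s. t0 < s \<Longrightarrow> s \<le> t \<Longrightarrow> e s \<noteq> 0"
    using obtain_last_zero[OF cont_t _ e0] t by auto
  have dF: "(F has_real_derivative
      exp (\<omega> * (s - a)) * (\<omega> * norm (e s) + (e' s \<bullet> e s) / norm (e s) - c)) (at s)"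
    if "t0 < s" "s < t" for s
  proof -
    have "(e has_vector_derivative e' s) (at s)" using that t0 t by (intro der) auto
    moreover have "e s \<noteq> 0" using that by (intro nz) auto
    ultimately have "((\<lambda>s. exp (\<omega> * (s - a)) * norm (e s)) has_real_derivative
        exp (\<omega> * (s - a)) * (\<omega> * norm (e s) + (e' s \<bullet> e s) / norm (e s))) (at s)"
      by (rule has_real_derivative_exp_weighted_norm)
    from DERIV_diff[OF this DERIV_cmult[OF \<Phi>[of s]]] show ?thesis
      unfolding F_def by (simp add: algebra_simps)
  qed
  have "continuous_on {t0..t} F"
    unfolding F_def using cont_t t0 \<Phi>
    by (intro continuous_intros continuous_on_subset[OF cont_t])
      (auto intro: DERIV_isCont continuous_at_imp_continuous_on)
  then obtain l z where z: "t0 < z" "z < t" "DERIV F z :> l" "F t - F t0 = (t - t0) * l"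
    using MVT[OF \<open>t0 < t\<close>] dF by (meson real_differentiable_def)
  have "norm (e z) > 0" using nz z by simp
  moreover have "e z \<bullet> e' z \<le> - \<omega> * (norm (e z))\<^sup>2 + c * norm (e z)"
    using energy z t0 t by simp
  ultimately have "(e' z \<bullet> e z) / norm (e z) \<le> - \<omega> * norm (e z) + c"
    by (simp add: divide_simps inner_commute power2_eq_square algebra_simps)
  then have "l \<le> 0"
    using DERIV_unique[OF z(3) dF[OF z(1,2)]] by (simp add: mult_nonneg_nonpos)
  then have "F t \<le> F t0" using z(4) mult_nonneg_nonpos[of "t - t0" l] t0 by simp
  then show False using Ft F_zero[OF t0(1,3)] by simp
qed

lemma norm_le_phi_of_energy_inequality:
  fixes e e' :: "real \<Rightarrow> 'a::real_inner"
  assumes dt: "dt > 0" and \<omega>: "\<omega> \<ge> 0" and e0: "e a = 0" and cont: "continuous_on {a..a+dt} e"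
    and der: "\<And>t. a < t \<Longrightarrow> t < a+dt \<Longrightarrow> (e has_vector_derivative e' t) (at t)"
    and energy: "\<And>t. a < t \<Longrightarrow> t < a+dt \<Longrightarrow> e t \<bullet> e' t \<le> - \<omega> * (norm (e t))\<^sup>2 + c * norm (e t)"
    and c: "c \<ge> 0"
    and t: "t \<in> {a..a+dt}"
  shows "norm (e t) \<le> c * (dt * phi (- dt * \<omega>))"
proof (cases "\<omega> = 0")
  case True
  have "exp (\<omega> * (t - a)) * norm (e t) \<le> c * (t - a)"
    by (rule exp_weighted_norm_le[where \<Phi>="\<lambda>t. t - a", OF e0 cont der energy c _ _ t])
      (use True in \<open>auto intro!: derivative_eq_intros\<close>)
  also have "\<dots> \<le> c * dt" using t c by (intro mult_left_mono) auto
  finally show ?thesis using True by (simp add: phi_def)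
next
  case False
  then have \<omega>_pos: "\<omega> > 0" using \<omega> by simp
  have "exp (\<omega> * (t - a)) * norm (e t) \<le> c * ((exp (\<omega> * (t - a)) - 1) / \<omega>)"
    by (rule exp_weighted_norm_le[where \<Phi>="\<lambda>t. (exp (\<omega> * (t - a)) - 1) / \<omega>",
          OF e0 cont der energy c _ _ t])
      (use \<omega>_pos in \<open>auto intro!: derivative_eq_intros simp: field_simps\<close>)
  then have "norm (e t) \<le> c * ((exp (\<omega> * (t - a)) - 1) / \<omega>) / exp (\<omega> * (t - a))"
    by (metis exp_gt_zero mult.commute pos_le_divide_eq)
  also have "\<dots> = c * ((1 - 1 / exp (\<omega> * (t - a))) / \<omega>)"
    using \<omega>_pos by (simp add: field_simps)
  also have "\<dots> = c * ((1 - exp (- \<omega> * (t - a))) / \<omega>)"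
    by (simp add: exp_minus inverse_eq_divide)
  also have "\<dots> \<le> c * ((1 - exp (- \<omega> * dt)) / \<omega>)"
    using t \<omega>_pos c by (intro mult_left_mono divide_right_mono) auto
  also have "\<dots> = c * (dt * phi (- dt * \<omega>))"
    using \<omega>_pos dt by (simp add: phi_def field_simps)
  finally show ?thesis .
qed

lemma inner_linear_flow_error_le:
  fixes P Q :: "real^'n^'n" and y z g :: "real^'n"
  assumes coercive: "\<And>x. \<omega> * (x \<bullet> x) \<le> (P *v x) \<bullet> x"
  shows "(y - z) \<bullet> ((- (Q *v y) + g) - (- (P *v z) + g))
    \<le> - \<omega> * (norm (y - z))\<^sup>2 + mat_norm (Q - P) * norm y * norm (y - z)"
proof -
  have "(- (Q *v y) + g) - (- (P *v z) + g) = - (P *v (y - z)) - ((Q - P) *v y)"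
    by (simp add: matrix_vector_mult_diff_distrib matrix_vector_mult_diff_rdistrib algebra_simps)
  then have "(y - z) \<bullet> ((- (Q *v y) + g) - (- (P *v z) + g))
      = - ((P *v (y - z)) \<bullet> (y - z)) - ((Q - P) *v y) \<bullet> (y - z)"
    by (simp add: inner_diff_right inner_commute)
  also have "\<dots> \<le> - \<omega> * ((y - z) \<bullet> (y - z)) + norm ((Q - P) *v y) * norm (y - z)"
    using coercive[of "y - z"] norm_cauchy_schwarz[of "- ((Q - P) *v y)" "y - z"] by simp
  also have "\<dots> \<le> - \<omega> * ((y - z) \<bullet> (y - z)) + mat_norm (Q - P) * norm y * norm (y - z)"
    by (simp add: mult_right_mono norm_matrix_vector_mult_le)
  finally show ?thesis by (simp add: power2_norm_eq_inner)
qed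

lemma linear_flow_error_le:
  fixes y z :: "real \<Rightarrow> real^'n" and P Q :: "real \<Rightarrow> real^'n^'n"
  assumes dt: "dt > 0" and \<omega>: "\<omega> \<ge> 0"
    and y_ode: "\<And>t. t \<in> {a..a+dt} \<Longrightarrow>
        (y has_vector_derivative - (Q t *v y t) + g) (at t within {a..a+dt})"
    and z_ode: "\<And>t. t \<in> {a..a+dt} \<Longrightarrow>
        (z has_vector_derivative - (P t *v z t) + g) (at t within {a..a+dt})"
    and init: "y a = z a"
    and coercive: "\<And>t x. t \<in> {a..a+dt} \<Longrightarrow> \<omega> * (x \<bullet> x) \<le> (P t *v x) \<bullet> x"
    and perturbation: "\<And>t. t \<in> {a..a+dt} \<Longrightarrow> mat_norm (Q t - P t) * norm (y t) \<le> c"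
    and c: "c \<ge> 0"
    and t: "t \<in> {a..a+dt}"
  shows "norm (y t - z t) \<le> c * (dt * phi (- dt * \<omega>))"
proof (rule norm_le_phi_of_energy_inequality[OF dt \<omega> _ _ _ _ c t])
  let ?e' = "\<lambda>s. (- (Q s *v y s) + g) - (- (P s *v z s) + g)"
  show "y a - z a = 0" using init by simp
  show "continuous_on {a..a+dt} (\<lambda>s. y s - z s)"
    using y_ode z_ode by (intro continuous_intros continuous_on_of_has_vector_derivative)
  show "((\<lambda>s. y s - z s) has_vector_derivative ?e' s) (at s)" if "a < s" "s < a + dt" for s
    using has_vector_derivative_diff[OF y_ode z_ode, of s] that by (simp add: at_within_Icc_at)
  show "(y s - z s) \<bullet> ?e' s \<le> - \<omega> * (norm (y s - z s))\<^sup>2 + c * norm (y s - z s)"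
    if "a < s" "s < a + dt" for s
  proof -
    have "s \<in> {a..a+dt}" using that by simp
    then show ?thesis
      using inner_linear_flow_error_le[where Q="Q s" and y="y s" and z="z s" and g=g,
          OF coercive[OF \<open>s \<in> {a..a+dt}\<close>]]
        mult_right_mono[OF perturbation norm_ge_zero, of s "y s - z s"]
      by linarith
  qed
qed

lemma LIMSEQ_zero_of_contraction:
  fixes D :: "nat \<Rightarrow> real"
  assumes nonneg: "\<And>m. 0 \<le> D m" and step: "\<And>m. D (Suc m) \<le> q * D m"
    and "0 \<le> q" "q < 1"
  shows "D \<longlonglongrightarrow> 0"
proof (rule tendsto_sandwich[rotated 2, OF tendsto_const])
  have "D m \<le> q ^ m * D 0" for m
  proof (induction m)
    case (Suc m)
    have "D (Suc m) \<le> q * D m" by (rule step)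
    also have "\<dots> \<le> q * (q ^ m * D 0)" using Suc \<open>0 \<le> q\<close> by (rule mult_left_mono)
    finally show ?case by simp
  qed simp
  then show "\<forall>\<^sub>F m in sequentially. D m \<le> q ^ m * D 0" by simp
  show "(\<lambda>m. q ^ m * D 0) \<longlonglongrightarrow> 0"
    using LIMSEQ_power_zero[of q] assms(3,4) by (intro tendsto_mult_left_zero) auto
qed (use nonneg in auto)

theorem corollary4:
  fixes A :: "real^'n \<Rightarrow> real^'n^'n"
    and L tn dt \<omega> :: real
    and yn g :: "real^'n"
    and ytil :: "real \<Rightarrow> real^'n"
    and Y :: "nat \<Rightarrow> real \<Rightarrow> real^'n"
  assumes sym: "\<And>y. transpose (A y) = A y"
    and psd: "\<And>y x. 0 \<le> (A y *v x) \<bullet> x"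
    and lip: "\<And>u v. mat_norm (A u - A v) \<le> L * norm (u - v)"
    and Lpos: "L > 0"
    and dtpos: "dt > 0"
    and ytil_ode: "\<And>t. t \<in> {tn..tn+dt} \<Longrightarrow>
        (ytil has_vector_derivative (- (A (ytil t) *v ytil t) + g)) (at t within {tn..tn+dt})"
    and ytil_init: "ytil tn = yn"
    and Y0: "\<And>t. t \<in> {tn..tn+dt} \<Longrightarrow> Y 0 t = yn"
    and Y_ode: "\<And>m t. t \<in> {tn..tn+dt} \<Longrightarrow>
        (Y (Suc m) has_vector_derivative (- (A (Y m t) *v Y (Suc m) t) + g)) (at t within {tn..tn+dt})"
    and Y_init: "\<And>m. Y (Suc m) tn = yn"
    and omega_nonneg: "\<omega> \<ge> 0"
    and omega: "\<And>m t x. t \<in> {tn..tn+dt} \<Longrightarrow> (A (Y m t) *v x) \<bullet> x \<ge> \<omega> * (x \<bullet> x)"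
    and small: "dt * phi (- dt * \<omega>) * L * (SUP s\<in>{tn..tn+dt}. norm (ytil s)) < 1"
  shows "(\<forall>m. (SUP s\<in>{tn..tn+dt}. norm (ytil s - Y (Suc m) s))
            \<le> dt * phi (- dt * \<omega>) * L * (SUP s\<in>{tn..tn+dt}. norm (ytil s))
               * (SUP s\<in>{tn..tn+dt}. norm (ytil s - Y m s)))
       \<and> (\<lambda>m. SUP s\<in>{tn..tn+dt}. norm (ytil s - Y m s)) \<longlonglongrightarrow> 0"
proof -
  let ?I = "{tn..tn+dt}"
  define M where "M = (SUP s\<in>?I. norm (ytil s))"
  define D where "D m = (SUP s\<in>?I. norm (ytil s - Y m s))" for m
  define q where "q = dt * phi (- dt * \<omega>) * L * M"
  have cont_ytil: "continuous_on ?I ytil"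
    using ytil_ode by (rule continuous_on_of_has_vector_derivative)
  have cont_Y: "continuous_on ?I (Y m)" for m
  proof (cases m)
    case 0
    then show ?thesis using Y0 continuous_on_cong[of ?I ?I "Y 0" "\<lambda>_. yn"] by simp
  next
    case (Suc k)
    then show ?thesis using continuous_on_of_has_vector_derivative[OF Y_ode[where m=k]] by simp
  qed
  have le_D: "norm (ytil s - Y m s) \<le> D m" if "s \<in> ?I" for s m
    unfolding D_def by (rule norm_le_SUP_Icc[OF continuous_on_diff[OF cont_ytil cont_Y] that])
  have le_M: "norm (ytil s) \<le> M" if "s \<in> ?I" for s
    unfolding M_def by (rule norm_le_SUP_Icc[OF cont_ytil that])
  have tn: "tn \<in> ?I" using dtpos by simp
  have D_nonneg: "0 \<le> D m" for m using le_D[OF tn] norm_ge_zero order_trans by blast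
  have M_nonneg: "0 \<le> M" using le_M[OF tn] norm_ge_zero order_trans by blast
  have step: "D (Suc m) \<le> q * D m" for m
  proof -
    have "mat_norm (A (ytil s) - A (Y m s)) * norm (ytil s) \<le> L * D m * M" if "s \<in> ?I" for s
    proof (rule mult_mono)
      show "mat_norm (A (ytil s) - A (Y m s)) \<le> L * D m"
        using order_trans[OF lip mult_left_mono[OF le_D[OF that]]] Lpos by simp
    qed (simp_all add: le_M[OF that] Lpos less_imp_le D_nonneg)
    then have "norm (ytil t - Y (Suc m) t) \<le> (L * D m * M) * (dt * phi (- dt * \<omega>))"
      if "t \<in> ?I" for t
      using linear_flow_error_le[where Q="\<lambda>s. A (ytil s)" and P="\<lambda>s. A (Y m s)",
          OF dtpos omega_nonneg ytil_ode Y_ode _ omega _ _ that]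
        ytil_init Y_init Lpos D_nonneg M_nonneg
      by simp
    then have "D (Suc m) \<le> (L * D m * M) * (dt * phi (- dt * \<omega>))"
      unfolding D_def by (rule cSUP_least[rotated]) (use tn in blast)+
    then show ?thesis by (simp add: q_def algebra_simps)
  qed
  have "0 \<le> q" unfolding q_def
    using dtpos Lpos M_nonneg phi_pos[of "- dt * \<omega>"] omega_nonneg by simp
  moreover have "q < 1" using small by (simp add: q_def M_def)
  ultimately have "D \<longlonglongrightarrow> 0" by (rule LIMSEQ_zero_of_contraction[where D=D, OF D_nonneg step])
  then show ?thesis using step unfolding D_def q_def M_def by simp
qed

end
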